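(* Let $\mathbf{A}\in\mathbb{R}^{N\times N}$ have $N$ pairwise distinct real eigenvalues, $\mathbf{A}=\mathbf{R}\boldsymbol{\Lambda}\mathbf{R}^{-1}$ with $\boldsymbol{\Lambda}=\mathrm{diag}(\lambda_1,\dots,\lambda_N)$, and let $\mathbf{H}$ be symmetric positive definite with $\mathbf{H}\mathbf{A}$ symmetric. Let $x_s<x_\infty$ and let $\Gamma_s\in C^1(\mathbb{R})$ be nonincreasing, with $\Gamma_s\equiv1$ on $]-\infty,x_s]$ and $\Gamma_s$ constant on $[x_\infty,\infty[$. Define $\mathbf{S}(x)=\mathbf{R}\,\mathrm{diag}(\tilde\lambda_1(x),\dots,\tilde\lambda_N(x))\mathbf{R}^{-1}$, where $\tilde\lambda_i(x)=\lambda_i$ if $\lambda_i\le0$ and $\tilde\lambda_i(x)=\Gamma_s(x)\lambda_i$ if $\lambda_i>0$. Then for every $x\in\mathbb{R}$ the matrix $\mathbf{H}\mathbf{S}(x)$ is symmetric and $\mathbf{H}\mathbf{S}'(x)$ is symmetric negative semidefinite. Moreover, if $T>0$ and $\mathbf{q}\in C^1([0,T]\times\mathbb{R};\mathbb{R}^N)$ solves $\partial_t\mathbf{q}+\mathbf{S}(x)\partial_x\mathbf{q}=\mathbf{0}$ and there is a compact set $K\subset\mathbb{R}$ with $\mathbf{q}(t,x)=0$ for all $t\in[0,T]$, $x\notin K$, then, with $v=\tfrac12\mathbf{q}^T\mathbf{H}\mathbf{q}$, $$\frac{d}{dt}\int_{\mathbb{R}} v(t,x)\,dx=\frac12\int_{x_s}^{x_\infty}\mathbf{q}(t,x)^T\mathbf{H}\mathbf{S}'(x)\,\mathbf{q}(t,x)\,dx\le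 0\quad\text{for all }t\in[0,T].$$
   Context: $\mathbf{S}(x)$ is a "slowing-down far-field operator" that slows only the right-going (positive-speed) characteristic fields inside the sponge layer $[x_s,x_\infty]$; $v$ is the quadratic convex entropy of the linear hyperbolic system $\partial_t\mathbf{q}+\mathbf{A}\partial_x\mathbf{q}=0$. *)

theory Defs
  imports "HOL-Analysis.Analysis"
begin

definition diag_mat :: "('n::finite \<Rightarrow> real) \<Rightarrow> real^'n^'n" where
  "diag_mat d = (\<chi> i j. if i = j then d i else 0)"

definition slowed_eig :: "(real \<Rightarrow> real) \<Rightarrow> ('n::finite \<Rightarrow> real) \<Rightarrow> real \<Rightarrow> 'n \<Rightarrow> real" where
  "slowed_eig \<Gamma> lam x i = (if lam i \<le> 0 then lam i else \<Gamma> x * lam i)"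

definition slow_op :: "real^'n^'n \<Rightarrow> ('n::finite \<Rightarrow> real) \<Rightarrow> (real \<Rightarrow> real) \<Rightarrow> real \<Rightarrow> real^'n^'n" where
  "slow_op R lam \<Gamma> x = R ** diag_mat (slowed_eig \<Gamma> lam x) ** matrix_inv R"

end

theory Submission
  imports Defs
begin

(*
  Since A = R diag(lam) R^-1 has distinct eigenvalues, R^T H R commutes with diag(lam) and is
  therefore diagonal, with nonnegative entries because H is positive definite.  Consequently
  H R diag(m) R^-1 is symmetric for every m and positive semidefinite for m >= 0.  Writing the
  slowed eigenvalues as min(lam, 0) + Gamma max(lam, 0) gives S' = Gamma' R diag(max(lam, 0)) R^-1,
  so H S' is symmetric and, as Gamma' <= 0, negative semidefinite; it vanishes outside the sponge.

  For the energy, differentiating under the integral and using the equation gives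
  d/dt int v = - int q^T H S q_x.  Since H S is symmetric,
  (q^T H S q)' = 2 q^T H S q_x + q^T H S' q, and integrating over an interval outside of which
  q vanishes turns the flux term into (1/2) int q^T H S' q.
*)

section \<open>Diagonal matrices and congruences\<close>

lemma matrix_inv_mult:
  assumes "invertible R"
  shows "R ** matrix_inv R = mat 1" and "matrix_inv R ** R = mat 1"
  using someI_ex[OF assms[unfolded invertible_def]] unfolding matrix_inv_def by auto

lemma matrix_mul_diag_mat_right: "(M ** diag_mat d) $ i $ j = M $ i $ j * (d j :: real)"
  unfolding matrix_matrix_mult_def diag_mat_def by (simp add: if_distrib cong: if_cong)

lemma matrix_mul_diag_mat_left: "(diag_mat d ** M) $ i $ j = (d i :: real) * M $ i $ j"
  unfolding matrix_matrix_mult_def diag_mat_def by (simp add: if_distrib if_distribR cong: if_cong)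

lemma diag_mat_mult: "diag_mat a ** diag_mat b = diag_mat (\<lambda>i. a i * b i :: real)"
  by (simp add: vec_eq_iff matrix_mul_diag_mat_right) (simp add: diag_mat_def)

lemma transpose_diag_mat: "transpose (diag_mat d) = (diag_mat d :: real^'n^'n)"
  unfolding transpose_def diag_mat_def by (simp add: vec_eq_iff)

lemma inner_diag_mat: "y \<bullet> (diag_mat d *v y) = (\<Sum>i\<in>UNIV. d i * (y $ i)\<^sup>2)"
  unfolding inner_vec_def matrix_vector_mult_def diag_mat_def
  by (simp add: if_distrib if_distribR power2_eq_square mult_ac cong: if_cong)

lemma commute_diag_mat_offdiag_zero:
  assumes "inj d" and "M ** diag_mat d = diag_mat d ** (M :: real^'n^'n)" and "i \<noteq> j"
  shows "M $ i $ j = 0"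
proof -
  have "M $ i $ j * d j = M $ i $ j * d i"
    using arg_cong[OF assms(2), of "\<lambda>X. X $ i $ j"]
    by (simp add: matrix_mul_diag_mat_left matrix_mul_diag_mat_right mult.commute)
  moreover have "d i \<noteq> d j" using assms(1,3) by (simp add: inj_eq)
  ultimately show ?thesis by simp
qed

lemma transpose_congruence:
  "transpose (transpose P ** X ** P) = transpose P ** transpose X ** (P :: real^'n^'n)"
  by (simp add: matrix_transpose_mul matrix_mul_assoc)

lemma inner_congruence:
  "y \<bullet> ((transpose P ** X ** P) *v y) = (P *v y) \<bullet> (X *v (P *v y :: real^'n))"
  by (simp add: matrix_vector_mul_assoc[symmetric] inner_commute[of y] inner_commute[of "X *v _"]
      dot_lmul_matrix)

lemma mult_diagonalized_by_congruence:
  fixes R H :: "real^'n^'n"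
  assumes R_inv: "invertible R" and D: "transpose R ** H ** R = diag_mat d"
  shows "H ** (R ** diag_mat m ** matrix_inv R)
       = transpose (matrix_inv R) ** diag_mat (\<lambda>i. d i * m i) ** matrix_inv R"
proof -
  have inv_transpose: "transpose (matrix_inv R) ** transpose R = mat 1"
    by (metis matrix_transpose_mul matrix_inv_mult(1)[OF R_inv] transpose_mat)
  have "H = transpose (matrix_inv R) ** (transpose R ** H ** R) ** matrix_inv R"
    by (simp add: matrix_mul_assoc inv_transpose)
      (simp add: matrix_mul_assoc[symmetric] matrix_inv_mult(1)[OF R_inv])
  then have "H ** (R ** diag_mat m ** matrix_inv R)
      = transpose (matrix_inv R) ** diag_mat d ** (matrix_inv R ** R) ** diag_mat m ** matrix_inv R"
    by (simp add: D matrix_mul_assoc)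
  also have "\<dots> = transpose (matrix_inv R) ** diag_mat (\<lambda>i. d i * m i) ** matrix_inv R"
    by (simp add: matrix_inv_mult(2)[OF R_inv] diag_mat_mult[symmetric] matrix_mul_assoc)
  finally show ?thesis .
qed

lemma matrix_add_rdistrib: "((A::real^'n^'m) + B) ** C = A ** C + B ** C"
  by (simp add: matrix_matrix_mult_def vec_eq_iff sum.distrib distrib_right)

lemma bounded_bilinear_matrix_vector_mult [bounded_bilinear]:
  "bounded_bilinear ((*v) :: real^'n^'m \<Rightarrow> real^'n \<Rightarrow> real^'m)"
  unfolding bilinear_conv_bounded_bilinear[symmetric] bilinear_def linear_iff
  by (simp add: matrix_vector_mult_add_rdistrib matrix_vector_right_distrib
      scaleR_matrix_vector_assoc matrix_vector_mult_scaleR)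

lemma bounded_linear_matrix_matrix_mult [bounded_linear]:
  "bounded_linear ((**) (H :: real^'n^'m) :: real^'p^'n \<Rightarrow> real^'p^'m)"
  unfolding linear_conv_bounded_linear[symmetric] linear_iff
  by (simp add: matrix_add_ldistrib matrix_scalar_ac scalar_matrix_assoc)

lemma quadratic_form_has_vector_derivative:
  fixes u :: "real \<Rightarrow> real^'n" and M :: "real \<Rightarrow> real^'n^'n"
  assumes "(u has_vector_derivative u') (at x within S)"
    and "(M has_vector_derivative M') (at x within S)"
  shows "((\<lambda>x. u x \<bullet> (M x *v u x)) has_vector_derivative
           u x \<bullet> (M x *v u') + u' \<bullet> (M x *v u x) + u x \<bullet> (M' *v u x)) (at x within S)"
proof -
  have "((\<lambda>x. M x *v u x) has_vector_derivative M x *v u' + M' *v u x) (at x within S)"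
    by (rule bounded_bilinear.has_vector_derivative[OF bounded_bilinear_matrix_vector_mult assms(2,1)])
  from bounded_bilinear.has_vector_derivative[OF bounded_bilinear_inner assms(1) this]
  show ?thesis by (simp add: inner_add_right algebra_simps)
qed

lemma symmetric_quadratic_form_commute:
  "transpose P = P \<Longrightarrow> u \<bullet> (P *v w) = w \<bullet> (P *v (u::real^'n))"
  by (metis dot_lmul_matrix inner_commute transpose_matrix_vector)

section \<open>Real analysis\<close>

lemma antimono_has_real_derivative_nonpos:
  assumes "antimono f" and f': "(f has_real_derivative f') (at x)"
  shows "f' \<le> 0"
proof (rule ccontr)
  assume "\<not> f' \<le> 0"
  then obtain d where "d > 0" and "\<And>h. 0 < h \<Longrightarrow> h < d \<Longrightarrow> f x < f (x + h)"
    using DERIV_pos_inc_right[OF f'] by force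
  then have "f x < f (x + d/2)" by simp
  moreover have "f (x + d/2) \<le> f x" using antimonoD[OF assms(1)] \<open>d > 0\<close> by simp
  ultimately show False by simp
qed

lemma locally_constant_has_real_derivative_zero:
  assumes "open S" "x \<in> S" "\<And>y. y \<in> S \<Longrightarrow> f y = c" "(f has_real_derivative f') (at x)"
  shows "f' = 0"
proof -
  have "(f has_real_derivative 0) (at x)"
    using has_field_derivative_transform_within_open[OF DERIV_const assms(1,2)] assms(3) by force
  then show ?thesis using assms(4) DERIV_unique by blast
qed

lemma C1_differentiable_on_UNIV_has_real_derivative:
  "f C1_differentiable_on UNIV \<Longrightarrow> (f has_real_derivative vector_derivative f (at x)) (at x)"
  unfolding C1_differentiable_on_eq has_real_derivative_iff_has_vector_derivative
  using vector_derivative_works by blast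

lemma continuous_on_slice:
  assumes "continuous_on (A \<times> B) (\<lambda>(t, x). f t x)" and "t \<in> A"
  shows "continuous_on B (f t)"
proof -
  have "continuous_on B ((\<lambda>(t, x). f t x) \<circ> (\<lambda>x. (t, x)))"
    using assms(2) by (intro continuous_on_compose continuous_intros continuous_on_subset[OF assms(1)]) auto
  then show ?thesis by (simp add: o_def)
qed

lemma integral_UNIV_vanishing_outside:
  fixes f :: "'a::euclidean_space \<Rightarrow> 'b::banach"
  assumes "\<And>x. x \<notin> S \<Longrightarrow> f x = 0"
  shows "integral UNIV f = integral S f"
proof -
  have "integral UNIV f = integral UNIV (\<lambda>x. if x \<in> S then f x else 0)"
    using assms by (intro integral_cong) auto
  then show ?thesis by (simp add: integral_restrict_UNIV)
qed

lemma quadratic_flux_has_integral: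
  fixes u u' :: "real \<Rightarrow> real^'n" and M M' :: "real \<Rightarrow> real^'n^'n"
  assumes "a \<le> b" and "u a = 0" and "u b = 0"
    and M_sym: "\<And>x. x \<in> {a..b} \<Longrightarrow> transpose (M x) = M x"
    and u': "\<And>x. x \<in> {a..b} \<Longrightarrow> (u has_vector_derivative u' x) (at x within {a..b})"
    and M': "\<And>x. x \<in> {a..b} \<Longrightarrow> (M has_vector_derivative M' x) (at x within {a..b})"
    and integrable: "(\<lambda>x. u x \<bullet> (M' x *v u x)) integrable_on {a..b}"
  shows "((\<lambda>x. u x \<bullet> (M x *v u' x)) has_integral
           - (1/2) * integral {a..b} (\<lambda>x. u x \<bullet> (M' x *v u x))) {a..b}"
proof -
  let ?g = "\<lambda>x. u x \<bullet> (M x *v u x)"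
  have "((\<lambda>x. 2 * (u x \<bullet> (M x *v u' x)) + u x \<bullet> (M' x *v u x)) has_integral ?g b - ?g a) {a..b}"
  proof (rule fundamental_theorem_of_calculus[OF \<open>a \<le> b\<close>])
    fix x assume x: "x \<in> {a..b}"
    show "(?g has_vector_derivative 2 * (u x \<bullet> (M x *v u' x)) + u x \<bullet> (M' x *v u x))
            (at x within {a..b})"
    proof -
      have "u x \<bullet> (M x *v u' x) + u' x \<bullet> (M x *v u x) + u x \<bullet> (M' x *v u x)
          = 2 * (u x \<bullet> (M x *v u' x)) + u x \<bullet> (M' x *v u x)"
        using symmetric_quadratic_form_commute[OF M_sym[OF x], of "u' x" "u x"] by simp
      with quadratic_form_has_vector_derivative[OF u'[OF x] M'[OF x]] show ?thesis
        by (simp only:)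
    qed
  qed
  from has_integral_diff[OF this integrable_integral[OF integrable]]
  have "((\<lambda>x. 2 * (u x \<bullet> (M x *v u' x))) has_integral
          - integral {a..b} (\<lambda>x. u x \<bullet> (M' x *v u x))) {a..b}"
    using \<open>u a = 0\<close> \<open>u b = 0\<close> by simp
  from has_integral_mult_right[OF this, of "1/2"] show ?thesis by simp
qed

lemma has_real_derivative_integral_bounded_support:
  fixes f f' :: "real \<Rightarrow> real \<Rightarrow> real"
  assumes f': "\<And>s x. s \<in> {c..d} \<Longrightarrow> ((\<lambda>s. f s x) has_real_derivative f' s x) (at s within {c..d})"
    and f_cont: "\<And>s. s \<in> {c..d} \<Longrightarrow> continuous_on {a..b} (f s)"
    and f'_cont: "continuous_on ({c..d} \<times> {a..b}) (\<lambda>(s, x). f' s x)"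
    and supp: "\<And>s x. s \<in> {c..d} \<Longrightarrow> x \<notin> {a..b} \<Longrightarrow> f s x = 0"
    and t: "t \<in> {c..d}"
  shows "((\<lambda>s. integral UNIV (f s)) has_real_derivative integral {a..b} (f' t)) (at t within {c..d})"
proof -
  have "((\<lambda>s. integral (cbox a b) (f s)) has_real_derivative integral (cbox a b) (f' t))
          (at t within {c..d})"
    using f' f_cont f'_cont t
    by (intro leibniz_rule_field_derivative) (auto intro: integrable_continuous_interval)
  moreover have "integral UNIV (f s) = integral {a..b} (f s)" if "s \<in> {c..d}" for s
    using supp[OF that] by (rule integral_UNIV_vanishing_outside)
  ultimately show ?thesis
    unfolding has_field_derivative_def cbox_interval
    by (rule has_derivative_transform[OF t, rotated]) simp
qed

section \<open>Energy of a symmetrizable linear system\<close>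

lemma quadratic_energy_has_real_derivative:
  fixes H :: "real^'n^'n" and q qt :: "real \<Rightarrow> real \<Rightarrow> real^'n"
  assumes H_sym: "transpose H = H"
    and q_t: "\<forall>t\<in>{0..T}. \<forall>x. ((\<lambda>s. q s x) has_vector_derivative qt t x) (at t within {0..T})"
    and q_cont: "continuous_on ({0..T} \<times> UNIV) (\<lambda>(t, x). q t x)"
    and qt_cont: "continuous_on ({0..T} \<times> UNIV) (\<lambda>(t, x). qt t x)"
    and supp: "\<And>s x. s \<in> {0..T} \<Longrightarrow> x \<notin> {a..b} \<Longrightarrow> q s x = 0"
    and t: "t \<in> {0..T}"
  shows "((\<lambda>s. integral UNIV (\<lambda>x. (1/2) * (q s x \<bullet> (H *v q s x)))) has_real_derivative
          integral {a..b} (\<lambda>x. q t x \<bullet> (H *v qt t x))) (at t within {0..T})"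
proof (rule has_real_derivative_integral_bounded_support[OF _ _ _ _ t])
  fix s x assume s: "s \<in> {0..T}"
  have "((\<lambda>s. q s x \<bullet> (H *v q s x)) has_vector_derivative
          q s x \<bullet> (H *v qt s x) + qt s x \<bullet> (H *v q s x) + q s x \<bullet> (0 *v q s x)) (at s within {0..T})"
    using q_t s by (intro quadratic_form_has_vector_derivative has_vector_derivative_const) blast
  then have "((\<lambda>s. q s x \<bullet> (H *v q s x)) has_real_derivative 2 * (q s x \<bullet> (H *v qt s x)))
               (at s within {0..T})"
    by (simp add: has_real_derivative_iff_has_vector_derivative
        symmetric_quadratic_form_commute[OF H_sym, of "qt s x"])
  from DERIV_cmult[OF this, of "1/2"]
  show "((\<lambda>s. (1/2) * (q s x \<bullet> (H *v q s x))) has_real_derivative q s x \<bullet> (H *v qt s x))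
          (at s within {0..T})"
    by simp
  show "continuous_on {a..b} (\<lambda>x. (1/2) * (q s x \<bullet> (H *v q s x)))"
    using continuous_on_slice[OF q_cont s] by (intro continuous_intros) (auto intro: continuous_on_subset)
  show "(1/2) * (q s x \<bullet> (H *v q s x)) = 0" if "x \<notin> {a..b}"
    using supp[OF s that] by simp
next
  have "continuous_on ({0..T} \<times> {a..b}) (\<lambda>p. (\<lambda>(s, x). q s x) p \<bullet> (H *v (\<lambda>(s, x). qt s x) p))"
    by (intro continuous_intros continuous_on_subset[OF q_cont] continuous_on_subset[OF qt_cont]) auto
  then show "continuous_on ({0..T} \<times> {a..b}) (\<lambda>(s, x). q s x \<bullet> (H *v qt s x))"
    by (simp add: case_prod_unfold)
qed

lemma energy_has_real_derivative:
  fixes H :: "real^'n^'n" and S S' :: "real \<Rightarrow> real^'n^'n"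
    and q qt qx :: "real \<Rightarrow> real \<Rightarrow> real^'n"
  assumes H_sym: "transpose H = H"
    and HS_sym: "\<And>x. transpose (H ** S x) = H ** S x"
    and S': "\<And>x. (S has_vector_derivative S' x) (at x)"
    and S'_cont: "continuous_on UNIV S'"
    and q_t: "\<forall>t\<in>{0..T}. \<forall>x. ((\<lambda>s. q s x) has_vector_derivative qt t x) (at t within {0..T})"
    and q_x: "\<forall>t\<in>{0..T}. \<forall>x. ((\<lambda>y. q t y) has_vector_derivative qx t x) (at x)"
    and q_cont: "continuous_on ({0..T} \<times> UNIV) (\<lambda>(t, x). q t x)"
    and qt_cont: "continuous_on ({0..T} \<times> UNIV) (\<lambda>(t, x). qt t x)"
    and pde: "\<forall>t\<in>{0..T}. \<forall>x. qt t x + S x *v qx t x = 0"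
    and "compact K" and supp: "\<forall>t\<in>{0..T}. \<forall>x. x \<notin> K \<longrightarrow> q t x = 0"
    and t: "t \<in> {0..T}"
  shows "((\<lambda>s. integral UNIV (\<lambda>x. (1/2) * (q s x \<bullet> (H *v q s x)))) has_real_derivative
          (1/2) * integral UNIV (\<lambda>x. q t x \<bullet> ((H ** S' x) *v q t x))) (at t within {0..T})"
proof -
  obtain c where "K \<subseteq> box (- c) c"
    using bounded_subset_box_symmetric[OF compact_imp_bounded[OF \<open>compact K\<close>]] by blast
  define a b where "a = - \<bar>c\<bar>" and "b = \<bar>c\<bar>"
  have "K \<subseteq> {a<..<b}"
    using \<open>K \<subseteq> box (- c) c\<close> by (auto simp: a_def b_def box_real)
  then have vanish: "q s x = 0" if "s \<in> {0..T}" "x \<notin> {a<..<b}" for s x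
    using supp that by blast
  let ?E' = "\<lambda>x. q t x \<bullet> ((H ** S' x) *v q t x)"
  have "((\<lambda>x. q t x \<bullet> ((H ** S x) *v qx t x)) has_integral - (1/2) * integral {a..b} ?E') {a..b}"
  proof (rule quadratic_flux_has_integral)
    show "((\<lambda>x. H ** S x) has_vector_derivative H ** S' x) (at x within {a..b})" for x
      using bounded_linear.has_vector_derivative[OF bounded_linear_matrix_matrix_mult S']
      by (rule has_vector_derivative_at_within)
    show "((\<lambda>y. q t y) has_vector_derivative qx t x) (at x within {a..b})" for x
      using q_x t by (blast intro: has_vector_derivative_at_within)
    show "?E' integrable_on {a..b}"
      using continuous_on_slice[OF q_cont t] S'_cont
      by (intro integrable_continuous_interval continuous_intros) (auto intro: continuous_on_subset)
  qed (use vanish[OF t] HS_sym in \<open>auto simp: a_def b_def\<close>)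
  moreover have "q t x \<bullet> (H *v qt t x) = - (q t x \<bullet> ((H ** S x) *v qx t x))" for x
  proof -
    have "qt t x = - (S x *v qx t x)" using pde t by (simp add: eq_neg_iff_add_eq_0)
    then show ?thesis by (simp add: linear_neg[OF matrix_vector_mul_linear] matrix_vector_mul_assoc)
  qed
  ultimately have "integral {a..b} (\<lambda>x. q t x \<bullet> (H *v qt t x)) = (1/2) * integral {a..b} ?E'"
    by (simp add: integral_unique)
  also have "integral {a..b} ?E' = integral UNIV ?E'"
    using vanish[OF t] by (intro integral_UNIV_vanishing_outside[symmetric]) auto
  finally have rate: "integral {a..b} (\<lambda>x. q t x \<bullet> (H *v qt t x)) = (1/2) * integral UNIV ?E'" .
  have "((\<lambda>s. integral UNIV (\<lambda>x. (1/2) * (q s x \<bullet> (H *v q s x)))) has_real_derivative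
          integral {a..b} (\<lambda>x. q t x \<bullet> (H *v qt t x))) (at t within {0..T})"
    by (rule quadratic_energy_has_real_derivative[OF H_sym q_t q_cont qt_cont _ t]) (use vanish in auto)
  then show ?thesis unfolding rate .
qed

section \<open>The slowing-down far-field operator\<close>

lemma slow_op_split:
  "slow_op R lam \<Gamma> x = R ** diag_mat (\<lambda>i. min (lam i) 0) ** matrix_inv R
     + \<Gamma> x *\<^sub>R (R ** diag_mat (\<lambda>i. max (lam i) 0) ** matrix_inv R)"
proof -
  have "diag_mat (slowed_eig \<Gamma> lam x)
      = diag_mat (\<lambda>i. min (lam i) 0) + \<Gamma> x *\<^sub>R diag_mat (\<lambda>i. max (lam i) 0)"
    by (simp add: vec_eq_iff diag_mat_def slowed_eig_def)
  then show ?thesis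
    unfolding slow_op_def
    by (simp add: matrix_add_ldistrib matrix_add_rdistrib matrix_scalar_ac scalar_matrix_assoc)
qed

lemma slow_op_has_vector_derivative:
  assumes "(\<Gamma> has_real_derivative g) (at x)"
  shows "(slow_op R lam \<Gamma> has_vector_derivative
           g *\<^sub>R (R ** diag_mat (\<lambda>i. max (lam i) 0) ** matrix_inv R)) (at x)"
  unfolding slow_op_split[abs_def]
  using has_vector_derivative_add[OF has_vector_derivative_const
      has_vector_derivative_scaleR[OF assms has_vector_derivative_const]]
  by simp

lemma slow_op_vector_derivative:
  assumes "\<Gamma> C1_differentiable_on UNIV"
  shows "vector_derivative (slow_op R lam \<Gamma>) (at x)
       = vector_derivative \<Gamma> (at x) *\<^sub>R (R ** diag_mat (\<lambda>i. max (lam i) 0) ** matrix_inv R)"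
  by (rule vector_derivative_at[OF slow_op_has_vector_derivative
        [OF C1_differentiable_on_UNIV_has_real_derivative[OF assms]]])

lemma sponge_derivative_vanishes:
  fixes \<Gamma> :: "real \<Rightarrow> real"
  assumes \<Gamma>_C1: "\<Gamma> C1_differentiable_on UNIV"
    and \<Gamma>_left: "\<forall>x\<le>xs. \<Gamma> x = 1" and \<Gamma>_right: "\<forall>x\<ge>xinf. \<Gamma> x = \<Gamma> xinf"
    and x: "x \<notin> {xs..xinf}"
  shows "vector_derivative \<Gamma> (at x) = 0"
proof -
  note \<Gamma>' = C1_differentiable_on_UNIV_has_real_derivative[OF \<Gamma>_C1, of x]
  consider "x \<in> {..<xs}" | "x \<in> {xinf<..}" using x by force
  then show ?thesis
  proof cases
    case 1
    show ?thesis
      using \<Gamma>_left by (intro locally_constant_has_real_derivative_zero[OF open_lessThan 1 _ \<Gamma>']) auto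
  next
    case 2
    \<comment> \<open>\<open>\<Gamma>_right\<close> must stay out of the simplifier: it rewrites \<open>\<Gamma> xinf\<close> to itself\<close>
    show ?thesis
      using \<Gamma>_right less_imp_le
      by (intro locally_constant_has_real_derivative_zero[OF open_greaterThan 2 _ \<Gamma>']) blast
  qed
qed

locale symmetrizable_system =
  fixes A R H :: "real^'n^'n" and lam :: "'n \<Rightarrow> real"
  assumes R_inv: "invertible R" and lam_distinct: "inj lam"
    and A_diag: "A = R ** diag_mat lam ** matrix_inv R"
    and H_sym: "transpose H = H"
    and HA_sym: "transpose (H ** A) = H ** A"
begin

lemma congruence_diagonal:
  "transpose R ** H ** R = diag_mat (\<lambda>i. (transpose R ** H ** R) $ i $ i)"
proof -
  let ?D = "transpose R ** H ** R"
  have AR: "A ** R = R ** diag_mat lam"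
    by (simp add: A_diag matrix_mul_assoc[symmetric] matrix_inv_mult(2)[OF R_inv])
  have "?D ** diag_mat lam = transpose R ** (H ** A) ** R"
    by (simp add: matrix_mul_assoc[symmetric] AR)
  also have "\<dots> = transpose R ** transpose (H ** A) ** R"
    by (simp add: HA_sym)
  also have "\<dots> = transpose (A ** R) ** H ** R"
    by (simp add: matrix_transpose_mul H_sym matrix_mul_assoc)
  also have "\<dots> = diag_mat lam ** ?D"
    by (simp add: AR matrix_transpose_mul transpose_diag_mat matrix_mul_assoc)
  finally have "?D ** diag_mat lam = diag_mat lam ** ?D" .
  \<comment> \<open>a matrix commuting with a diagonal matrix of distinct entries is itself diagonal\<close>
  then have "?D $ i $ j = 0" if "i \<noteq> j" for i j
    using commute_diag_mat_offdiag_zero[OF lam_distinct] that by blast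
  then show ?thesis
    by (auto simp: vec_eq_iff diag_mat_def)
qed

lemma H_mult_diagonalized_symmetric:
  "transpose (H ** (R ** diag_mat m ** matrix_inv R)) = H ** (R ** diag_mat m ** matrix_inv R)"
  unfolding mult_diagonalized_by_congruence[OF R_inv congruence_diagonal]
  by (simp add: transpose_congruence transpose_diag_mat)

lemma H_mult_diagonalized_nonneg:
  assumes H_psd: "\<And>y. 0 \<le> y \<bullet> (H *v y)" and m_nonneg: "\<And>i. 0 \<le> m i"
  shows "0 \<le> y \<bullet> ((H ** (R ** diag_mat m ** matrix_inv R)) *v y)"
proof -
  let ?d = "\<lambda>i. (transpose R ** H ** R) $ i $ i"
  have d_nonneg: "0 \<le> ?d i" for i
  proof -
    have "?d i = axis i 1 \<bullet> (diag_mat ?d *v axis i 1)"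
      by (simp add: inner_diag_mat axis_def power2_eq_square if_distrib if_distribR cong: if_cong)
    also have "\<dots> = axis i 1 \<bullet> ((transpose R ** H ** R) *v axis i 1)"
      by (simp only: congruence_diagonal[symmetric])
    also have "\<dots> \<ge> 0"
      by (simp add: inner_congruence H_psd)
    finally show ?thesis .
  qed
  show ?thesis
    unfolding mult_diagonalized_by_congruence[OF R_inv congruence_diagonal] inner_congruence inner_diag_mat
    by (intro sum_nonneg mult_nonneg_nonneg d_nonneg m_nonneg zero_le_power2)
qed

lemma H_slow_op_symmetric: "transpose (H ** slow_op R lam \<Gamma> x) = H ** slow_op R lam \<Gamma> x"
  unfolding slow_op_def by (rule H_mult_diagonalized_symmetric)

lemma H_slow_op_derivative_symmetric:
  assumes "\<Gamma> C1_differentiable_on UNIV"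
  shows "transpose (H ** vector_derivative (slow_op R lam \<Gamma>) (at x))
       = H ** vector_derivative (slow_op R lam \<Gamma>) (at x)"
  by (simp add: slow_op_vector_derivative[OF assms] matrix_scalar_ac scalar_matrix_assoc[symmetric]
      transpose_scalar H_mult_diagonalized_symmetric)

lemma H_slow_op_derivative_nonpos:
  assumes H_psd: "\<And>y. 0 \<le> y \<bullet> (H *v y)"
    and \<Gamma>_C1: "\<Gamma> C1_differentiable_on UNIV" and \<Gamma>_noninc: "antimono \<Gamma>"
  shows "y \<bullet> ((H ** vector_derivative (slow_op R lam \<Gamma>) (at x)) *v y) \<le> 0"
proof -
  have "y \<bullet> ((H ** vector_derivative (slow_op R lam \<Gamma>) (at x)) *v y)
      = vector_derivative \<Gamma> (at x)
        * (y \<bullet> ((H ** (R ** diag_mat (\<lambda>i. max (lam i) 0) ** matrix_inv R)) *v y))"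
    by (simp add: slow_op_vector_derivative[OF \<Gamma>_C1] matrix_scalar_ac
        scalar_matrix_assoc[symmetric] scaleR_matrix_vector_assoc[symmetric])
  also have "\<dots> \<le> 0"
    using antimono_has_real_derivative_nonpos[OF \<Gamma>_noninc
        C1_differentiable_on_UNIV_has_real_derivative[OF \<Gamma>_C1]]
    by (intro mult_nonpos_nonneg H_mult_diagonalized_nonneg H_psd) auto
  finally show ?thesis .
qed

lemma slow_energy_has_real_derivative:
  fixes q qt qx :: "real \<Rightarrow> real \<Rightarrow> real^'n"
  assumes \<Gamma>_C1: "\<Gamma> C1_differentiable_on UNIV"
    and \<Gamma>_left: "\<forall>x\<le>xs. \<Gamma> x = 1" and \<Gamma>_right: "\<forall>x\<ge>xinf. \<Gamma> x = \<Gamma> xinf"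
    and q_t: "\<forall>t\<in>{0..T}. \<forall>x. ((\<lambda>s. q s x) has_vector_derivative qt t x) (at t within {0..T})"
    and q_x: "\<forall>t\<in>{0..T}. \<forall>x. ((\<lambda>y. q t y) has_vector_derivative qx t x) (at x)"
    and q_cont: "continuous_on ({0..T} \<times> UNIV) (\<lambda>(t, x). q t x)"
    and qt_cont: "continuous_on ({0..T} \<times> UNIV) (\<lambda>(t, x). qt t x)"
    and pde: "\<forall>t\<in>{0..T}. \<forall>x. qt t x + slow_op R lam \<Gamma> x *v qx t x = 0"
    and K: "compact K" and supp: "\<forall>t\<in>{0..T}. \<forall>x. x \<notin> K \<longrightarrow> q t x = 0"
    and t: "t \<in> {0..T}"
  shows "((\<lambda>s. integral UNIV (\<lambda>x. (1/2) * (q s x \<bullet> (H *v q s x)))) has_real_derivative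
          (1/2) * integral {xs..xinf}
            (\<lambda>x. q t x \<bullet> ((H ** vector_derivative (slow_op R lam \<Gamma>) (at x)) *v q t x)))
         (at t within {0..T})"
proof -
  let ?S' = "\<lambda>x. vector_derivative (slow_op R lam \<Gamma>) (at x)"
  have S': "(slow_op R lam \<Gamma> has_vector_derivative ?S' x) (at x)" for x
    unfolding slow_op_vector_derivative[OF \<Gamma>_C1]
    by (rule slow_op_has_vector_derivative[OF C1_differentiable_on_UNIV_has_real_derivative[OF \<Gamma>_C1]])
  have S'_cont: "continuous_on UNIV ?S'"
    using \<Gamma>_C1 unfolding slow_op_vector_derivative[OF \<Gamma>_C1] C1_differentiable_on_eq
    by (intro continuous_intros) auto
  have "integral UNIV (\<lambda>x. q t x \<bullet> ((H ** ?S' x) *v q t x))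
      = integral {xs..xinf} (\<lambda>x. q t x \<bullet> ((H ** ?S' x) *v q t x))"
    by (rule integral_UNIV_vanishing_outside)
      (simp add: slow_op_vector_derivative[OF \<Gamma>_C1]
        sponge_derivative_vanishes[OF \<Gamma>_C1 \<Gamma>_left \<Gamma>_right])
  with energy_has_real_derivative[OF H_sym H_slow_op_symmetric S' S'_cont q_t q_x q_cont qt_cont
      pde K supp t]
  show ?thesis by simp
qed

lemma sponge_integral_nonpos:
  assumes H_psd: "\<And>y. 0 \<le> y \<bullet> (H *v y)"
    and \<Gamma>_C1: "\<Gamma> C1_differentiable_on UNIV" and \<Gamma>_noninc: "antimono \<Gamma>"
    and u_cont: "continuous_on {a..b} u"
  shows "integral {a..b} (\<lambda>x. u x \<bullet> ((H ** vector_derivative (slow_op R lam \<Gamma>) (at x)) *v u x)) \<le> 0"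
proof -
  have "continuous_on {a..b} (\<lambda>x. vector_derivative (slow_op R lam \<Gamma>) (at x))"
    using \<Gamma>_C1 unfolding slow_op_vector_derivative[OF \<Gamma>_C1] C1_differentiable_on_eq
    by (intro continuous_intros) (auto intro: continuous_on_subset)
  then have "integral {a..b} (\<lambda>x. u x \<bullet> ((H ** vector_derivative (slow_op R lam \<Gamma>) (at x)) *v u x))
      \<le> integral {a..b} (\<lambda>_. 0)"
    using u_cont H_slow_op_derivative_nonpos[OF H_psd \<Gamma>_C1 \<Gamma>_noninc]
    by (intro integral_le integrable_continuous_interval continuous_intros) auto
  then show ?thesis by simp
qed

end

theorem mainTheorem5:
  fixes A R H :: "real^'n^'n"
    and lam :: "'n \<Rightarrow> real"
    and \<Gamma> :: "real \<Rightarrow> real"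
    and xs xinf :: real
  assumes R_inv: "invertible R"
    and lam_distinct: "inj lam"
    and A_diag: "A = R ** diag_mat lam ** matrix_inv R"
    and H_sym: "transpose H = H"
    and H_pd: "\<forall>y::real^'n. y \<noteq> 0 \<longrightarrow> y \<bullet> (H *v y) > 0"
    and HA_sym: "transpose (H ** A) = H ** A"
    and xs_less: "xs < xinf"
    and \<Gamma>_C1: "\<Gamma> C1_differentiable_on UNIV"
    and \<Gamma>_noninc: "antimono \<Gamma>"
    and \<Gamma>_left: "\<forall>x\<le>xs. \<Gamma> x = 1"
    and \<Gamma>_right: "\<forall>x\<ge>xinf. \<Gamma> x = \<Gamma> xinf"
  shows "(\<forall>x. transpose (H ** slow_op R lam \<Gamma> x) = H ** slow_op R lam \<Gamma> x
            \<and> slow_op R lam \<Gamma> differentiable (at x)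
            \<and> transpose (H ** vector_derivative (slow_op R lam \<Gamma>) (at x))
                = H ** vector_derivative (slow_op R lam \<Gamma>) (at x)
            \<and> (\<forall>y::real^'n. y \<bullet> ((H ** vector_derivative (slow_op R lam \<Gamma>) (at x)) *v y) \<le> 0))
    \<and> (\<forall>(T::real) (q :: real \<Rightarrow> real \<Rightarrow> real^'n) (qt :: real \<Rightarrow> real \<Rightarrow> real^'n)
         (qx :: real \<Rightarrow> real \<Rightarrow> real^'n) (K :: real set).
         T > 0
         \<and> (\<forall>t\<in>{0..T}. \<forall>x. ((\<lambda>s. q s x) has_vector_derivative qt t x) (at t within {0..T}))
         \<and> (\<forall>t\<in>{0..T}. \<forall>x. ((\<lambda>y. q t y) has_vector_derivative qx t x) (at x))
         \<and> continuous_on ({0..T} \<times> UNIV) (\<lambda>(t, x). q t x)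
         \<and> continuous_on ({0..T} \<times> UNIV) (\<lambda>(t, x). qt t x)
         \<and> continuous_on ({0..T} \<times> UNIV) (\<lambda>(t, x). qx t x)
         \<and> (\<forall>t\<in>{0..T}. \<forall>x. qt t x + slow_op R lam \<Gamma> x *v qx t x = 0)
         \<and> compact K
         \<and> (\<forall>t\<in>{0..T}. \<forall>x. x \<notin> K \<longrightarrow> q t x = 0)
         \<longrightarrow> (\<forall>t\<in>{0..T}.
               ((\<lambda>s. integral UNIV (\<lambda>x. (1/2) * (q s x \<bullet> (H *v q s x))))
                  has_real_derivative
                  ((1/2) * integral {xs..xinf}
                     (\<lambda>x. q t x \<bullet> ((H ** vector_derivative (slow_op R lam \<Gamma>) (at x)) *v q t x))))
                 (at t within {0..T})
               \<and> (1/2) * integral {xs..xinf}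
                     (\<lambda>x. q t x \<bullet> ((H ** vector_derivative (slow_op R lam \<Gamma>) (at x)) *v q t x)) \<le> 0))"
proof -
  interpret symmetrizable_system A R H lam
    using R_inv lam_distinct A_diag H_sym HA_sym by unfold_locales
  have H_psd: "\<And>y. 0 \<le> y \<bullet> (H *v y)"
    using H_pd by (metis inner_zero_left order_less_imp_le order_refl)
  note \<Gamma>' = C1_differentiable_on_UNIV_has_real_derivative[OF \<Gamma>_C1]
  show ?thesis
    apply (intro conjI allI impI ballI; (elim conjE)?)
    subgoal by (rule H_slow_op_symmetric)
    subgoal by (rule differentiableI_vector[OF slow_op_has_vector_derivative[OF \<Gamma>']])
    subgoal by (rule H_slow_op_derivative_symmetric[OF \<Gamma>_C1])
    subgoal by (rule H_slow_op_derivative_nonpos[OF H_psd \<Gamma>_C1 \<Gamma>_noninc])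
    subgoal by (rule slow_energy_has_real_derivative[OF \<Gamma>_C1 \<Gamma>_left \<Gamma>_right])
    subgoal for T q qt qx K t
      using sponge_integral_nonpos[OF H_psd \<Gamma>_C1 \<Gamma>_noninc, of xs xinf "q t"]
        continuous_on_slice[of "{0..T}" UNIV q t]
      by (auto intro: continuous_on_subset)
    done
qed

end
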